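(* Let $m\ge1$, let $\mathcal{I}\subseteq\mathcal{M}_m$ be a decreasing monomial set with $r=\max_{f\in\mathcal{I}}\deg f$, and let $f,g,f^*,g^*\in\mathcal{I}_r$ with $\{f,g\}\neq\{f^*,g^*\}$ such that $h=\gcd(f,g)$ and $h^*=\gcd(f^*,g^* )$ satisfy $\deg(h)=\deg(h^* )=r-2$. Then the sets \[ {\rm LTA}(m,2)_h\cdot h\cdot\Big({\rm LTA}(m,2)_{f} \cdot \tfrac{f}{h}+{\rm LTA}(m,2)_{g}\cdot \tfrac{g}{h}\Big)\quad\text{and}\quad {\rm LTA}(m,2)_{h^*}\cdot h^*\cdot\Big({\rm LTA}(m,2)_{f^*} \cdot \tfrac{f^*}{h^*}+{\rm LTA}(m,2)_{g^*}\cdot \tfrac{g^*}{h^*}\Big) \] are disjoint.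
   Context: $\mathbf{R}_m=\mathbb{F}_2[x_0,\dots,x_{m-1}]/(x_0^2-x_0,\dots,x_{m-1}^2-x_{m-1})$. $\mathcal{M}_m$ is the set of monomials $x_0^{i_0}\cdots x_{m-1}^{i_{m-1}}$, $i_j\in\{0,1\}$. For a monomial $f$, $\operatorname{ind}(f)$ is the set of indices of variables dividing $f$, $\deg f=|\operatorname{ind}(f)|$; $\gcd(f,g)$ has $\operatorname{ind}=\operatorname{ind}(f)\cap\operatorname{ind}(g)$; for $h\mid f$, $f/h$ has $\operatorname{ind}=\operatorname{ind}(f)\setminus\operatorname{ind}(h)$. Order: $f\preceq_w g$ iff $\operatorname{ind}(f)\subseteq\operatorname{ind}(g)$; for equal-degree $f=x_{i_1}\cdots x_{i_s}$, $g=x_{j_1}\cdots x_{j_s}$ (increasing indices), $f\preceq_{sh}g$ iff $i_\ell\le j_\ell$ for all $\ell$; $f\preceq g$ iff $f\preceq_{sh}g^*\preceq_w g$ for some $g^*$. $\mathcal{I}$ is decreasing if $f\in\mathcal{I}$, $g\preceq f$ imply $g\in\mathcal{I}$; $\mathcal{I}_r=\{f\in\mathcal{I}:\deg f=r\}$. ${\rm LTA}(m,2)$ is the set of pairs $(\mathbf{B},\varepsilon)$ with $\mathbf{B}=(b_{i,j})\in\mathbb{F}_2^{m\times m}$ lower triangular with ones on the diagonal and $\varepsilon\in\mathbb{F}_2^m$; for a monomial $u$, $(\mathbf{B},\varepsilon)\cdot u\in\mathbf{R}_m$ replaces each variable $x_i$ of $u$ by $x_i+\sum_{j<i}b_{i,j}x_j+\varepsilon_i$.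 For a monomial $g$, ${\rm LTA}(m,2)_g$ is the set of $(\mathbf{B},\varepsilon)\in{\rm LTA}(m,2)$ with $\varepsilon_i=0$ for $i\notin\operatorname{ind}(g)$ and $b_{i,j}=0$ (for $j<i$) whenever $i\notin\operatorname{ind}(g)$ or $j\in\operatorname{ind}(g)$. For $G\subseteq{\rm LTA}(m,2)$ and monomial $u$, $G\cdot u=\{(\mathbf{B},\varepsilon)\cdot u:(\mathbf{B},\varepsilon)\in G\}$. For sets $\mathcal{S},\mathcal{T}\subseteq\mathbf{R}_m$: $\mathcal{S}+\mathcal{T}=\{s+t\}$, $\mathcal{S}\cdot\mathcal{T}=\{st\}$; $G\cdot h\cdot(\mathcal{S})$ is the product of the set $G\cdot h$ with the set $\mathcal{S}$. *)

theory Defs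
  imports Main
begin

text \<open>Elements of R_m = F_2[x_0..x_{m-1}]/(x_i^2 - x_i) are represented in the
standard monomial basis: a monomial is the (finite) set of indices of its
variables, and an element of R_m is the finite set of monomials occurring with
coefficient 1.\<close>

type_synonym mono = "nat set"
type_synonym rpoly = "nat set set"

definition monomials :: "nat \<Rightarrow> mono set" where
  "monomials m = Pow {..<m}"

definition padd :: "rpoly \<Rightarrow> rpoly \<Rightarrow> rpoly" where
  "padd p q = (p - q) \<union> (q - p)"

definition pmul :: "rpoly \<Rightarrow> rpoly \<Rightarrow> rpoly" where
  "pmul p q = {u. odd (card {(a, b). a \<in> p \<and> b \<in> q \<and> a \<union> b = u})}"

definition pone :: rpoly where "pone = {{}}"

definition pvar :: "nat \<Rightarrow> rpoly" where "pvar i = {{i}}"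

definition prec_w :: "mono \<Rightarrow> mono \<Rightarrow> bool" where
  "prec_w f g \<longleftrightarrow> f \<subseteq> g"

definition prec_sh :: "mono \<Rightarrow> mono \<Rightarrow> bool" where
  "prec_sh f g \<longleftrightarrow> card f = card g \<and>
     (\<forall>l < card f. sorted_list_of_set f ! l \<le> sorted_list_of_set g ! l)"

definition prec :: "nat \<Rightarrow> mono \<Rightarrow> mono \<Rightarrow> bool" where
  "prec m f g \<longleftrightarrow> (\<exists>g' \<in> monomials m. prec_sh f g' \<and> prec_w g' g)"

definition decreasing :: "nat \<Rightarrow> mono set \<Rightarrow> bool" where
  "decreasing m I \<longleftrightarrow> I \<subseteq> monomials m \<and>
     (\<forall>f \<in> I. \<forall>g \<in> monomials m. prec m g f \<longrightarrow> g \<in> I)"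

definition layer :: "mono set \<Rightarrow> nat \<Rightarrow> mono set" where
  "layer I r = {f \<in> I. card f = r}"

text \<open>The lower triangular affine group LTA(m,2): a matrix B is a function
nat => nat => bool (B i j = entry b_{i,j}), lower triangular with ones on the
diagonal and zero outside the m x m block; eps is zero outside {..<m}.\<close>

definition lta :: "nat \<Rightarrow> ((nat \<Rightarrow> nat \<Rightarrow> bool) \<times> (nat \<Rightarrow> bool)) set" where
  "lta m = {(B, e). (\<forall>i<m. B i i) \<and> (\<forall>i j. B i j \<longrightarrow> j \<le> i \<and> i < m)
                   \<and> (\<forall>i. e i \<longrightarrow> i < m)}"

definition lta_stab :: "nat \<Rightarrow> mono \<Rightarrow> ((nat \<Rightarrow> nat \<Rightarrow> bool) \<times> (nat \<Rightarrow> bool)) set" where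
  "lta_stab m g = {(B, e) \<in> lta m. (\<forall>i. i \<notin> g \<longrightarrow> \<not> e i) \<and>
       (\<forall>i j. j < i \<and> (i \<notin> g \<or> j \<in> g) \<longrightarrow> \<not> B i j)}"

definition lin_img :: "(nat \<Rightarrow> nat \<Rightarrow> bool) \<Rightarrow> (nat \<Rightarrow> bool) \<Rightarrow> nat \<Rightarrow> rpoly" where
  "lin_img B e i = padd (pvar i)
      (padd (foldr padd (map pvar (filter (\<lambda>j. B i j) [0..<i])) {})
            (if e i then pone else {}))"

definition act :: "(nat \<Rightarrow> nat \<Rightarrow> bool) \<times> (nat \<Rightarrow> bool) \<Rightarrow> mono \<Rightarrow> rpoly" where
  "act Be u = foldr pmul (map (lin_img (fst Be) (snd Be)) (sorted_list_of_set u)) pone"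

definition orbit :: "((nat \<Rightarrow> nat \<Rightarrow> bool) \<times> (nat \<Rightarrow> bool)) set \<Rightarrow> mono \<Rightarrow> rpoly set" where
  "orbit G u = (\<lambda>Be. act Be u) ` G"

definition set_add :: "rpoly set \<Rightarrow> rpoly set \<Rightarrow> rpoly set" where
  "set_add S T = {padd s t | s t. s \<in> S \<and> t \<in> T}"

definition set_mul :: "rpoly set \<Rightarrow> rpoly set \<Rightarrow> rpoly set" where
  "set_mul S T = {pmul s t | s t. s \<in> S \<and> t \<in> T}"

text \<open>LTA(m,2)_h . h . (LTA(m,2)_f . f/h + LTA(m,2)_g . g/h) with h = gcd(f,g).\<close>

definition pair_set :: "nat \<Rightarrow> mono \<Rightarrow> mono \<Rightarrow> rpoly set" where
  "pair_set m f g = (let h = f \<inter> g in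
     set_mul (orbit (lta_stab m h) h)
       (set_add (orbit (lta_stab m f) (f - h)) (orbit (lta_stab m g) (g - h))))"

end

theory Submission
  imports Defs
begin

text \<open>A point of \<open>\<bbbF>\<^sub>2\<^sup>m\<close> is identified with its support \<open>x\<close>, and a Boolean function with a
  predicate on supports (\<open>\<noteq>\<close> is addition in \<open>\<bbbF>\<^sub>2\<close>). An element of \<open>LTA(m,2)\<close> sends \<open>x\<^sub>i\<close> to
  \<open>L\<^sub>i = x\<^sub>i + \<phi>\<^sub>i(x\<^sub>0, \<dots>, x\<^bsub>i-1\<^esub>)\<close>, a triangular function, so every element of the set attached to
  \<open>(f, g)\<close> evaluates to \<open>L\<^sup>f + L\<^sup>g\<close>, where \<open>L\<^sup>u = \<Prod>\<^bsub>i\<in>u\<^esub> L\<^sub>i\<close>, for some triangular family \<open>L\<close>.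
  It remains to show that such a function determines \<open>{f, g}\<close> when \<open>|f - g| = |g - f| = 2\<close>,
  whatever the triangular family. This goes by induction on \<open>|f \<inter> g|\<close>, differentiating in the
  largest variable \<open>t = max (f \<union> g)\<close> the function depends on. If \<open>t \<in> f \<inter> g\<close>, the derivative
  is \<open>L\<^bsup>f-t\<^esup> + L\<^bsup>g-t\<^esup>\<close> and induction applies; if \<open>t\<close> lies in \<open>f\<close> only, the derivative is the
  monomial \<open>L\<^bsup>f-t\<^esup>\<close>, which determines \<open>f\<close>, and \<open>g\<close> is then read off the function on the zero
  set of \<open>L\<^bsup>f-t\<^esup>\<close>. Mixed cases cannot occur because a binomial with \<open>|f - g|, |g - f| \<ge> 2\<close> is
  never a monomial.\<close>

section \<open>Triangular Boolean functions\<close>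

definition flip :: "nat \<Rightarrow> nat set \<Rightarrow> nat set" where
  "flip t x = (if t \<in> x then x - {t} else insert t x)"

definition triangular :: "nat \<Rightarrow> (nat set \<Rightarrow> bool) \<Rightarrow> bool" where
  "triangular i l \<longleftrightarrow> (\<exists>\<phi>. \<forall>x. l x = ((i \<in> x) \<noteq> \<phi> (x \<inter> {..<i})))"

definition mono_fun :: "(nat \<Rightarrow> nat set \<Rightarrow> bool) \<Rightarrow> nat set \<Rightarrow> nat set \<Rightarrow> bool" where
  "mono_fun L u x \<longleftrightarrow> (\<forall>i\<in>u. L i x)"

definition bool_deriv :: "nat \<Rightarrow> (nat set \<Rightarrow> bool) \<Rightarrow> nat set \<Rightarrow> bool" where
  "bool_deriv t F x \<longleftrightarrow> F x \<noteq> F (flip t x)"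

definition top_var :: "(nat set \<Rightarrow> bool) \<Rightarrow> nat \<Rightarrow> bool" where
  "top_var F t \<longleftrightarrow> (\<exists>x. bool_deriv t F x) \<and> (\<forall>s>t. \<forall>x. \<not> bool_deriv s F x)"

lemma top_var_unique:
  assumes "top_var F t" "top_var F t'"
  shows "t = t'"
proof (rule ccontr)
  assume "t \<noteq> t'"
  then consider "t < t'" | "t' < t" by linarith
  then show False using assms unfolding top_var_def by cases blast+
qed

lemma top_var_const: "\<not> top_var (\<lambda>x. c) t"
  unfolding top_var_def bool_deriv_def by simp

lemma flip_Int_lessThan: "w \<le> t \<Longrightarrow> flip t x \<inter> {..<w} = x \<inter> {..<w}"
  by (auto simp: flip_def)

lemma triangular_cong:
  assumes "triangular i l" "x \<inter> {..i} = y \<inter> {..i}"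
  shows "l x = l y"
proof -
  obtain \<phi> where \<phi>: "\<And>z. l z = ((i \<in> z) \<noteq> \<phi> (z \<inter> {..<i}))"
    using assms(1) unfolding triangular_def by blast
  have "l z = ((i \<in> z \<inter> {..i}) \<noteq> \<phi> (z \<inter> {..i} \<inter> {..<i}))" for z
    unfolding \<phi> by (simp add: Int_assoc Int_absorb1 subset_eq)
  then show ?thesis using assms(2) by metis
qed

lemma triangular_flip_greater: "triangular i l \<Longrightarrow> i < t \<Longrightarrow> l (flip t x) = l x"
  by (erule triangular_cong) (auto simp: flip_def)

lemma triangular_flip_self: "triangular t l \<Longrightarrow> l (flip t x) = (\<not> l x)"
proof -
  assume "triangular t l"
  then obtain \<phi> where "\<And>x. l x = ((t \<in> x) \<noteq> \<phi> (x \<inter> {..<t}))"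
    unfolding triangular_def by blast
  moreover have "flip t x \<inter> {..<t} = x \<inter> {..<t}" by (rule flip_Int_lessThan) simp
  moreover have "t \<in> flip t x \<longleftrightarrow> t \<notin> x" by (simp add: flip_def)
  ultimately show ?thesis by simp
qed

text \<open>Solve for the indices in increasing order, flipping coordinate \<open>i\<close> where needed; the
  coordinates below \<open>w\<close> are never flipped if the equations below \<open>w\<close> already hold at \<open>y\<close>.\<close>

lemma triangular_solve:
  assumes "finite u" "\<forall>i\<in>u. triangular i (L i)" "\<forall>i\<in>u. i < w \<longrightarrow> L i y = s i"
  shows "\<exists>x. x \<inter> {..<w} = y \<inter> {..<w} \<and> (\<forall>i\<in>u. L i x = s i)"
  using assms
proof (induction u rule: finite_linorder_max_induct)
  case empty
  show ?case by blast
next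
  case (insert t u)
  have tri: "triangular t (L t)" "\<forall>i\<in>u. triangular i (L i)" using insert.prems(1) by simp_all
  then obtain x where x: "x \<inter> {..<w} = y \<inter> {..<w}" "\<forall>i\<in>u. L i x = s i"
    using insert.IH insert.prems(2) by blast
  show ?case
  proof (cases "L t x = s t")
    case True
    then show ?thesis using x by blast
  next
    case False
    have "w \<le> t"
    proof (rule ccontr)
      assume "\<not> w \<le> t"
      then have "z \<inter> {..t} = z \<inter> {..<w} \<inter> {..t}" for z :: "nat set" by auto
      then have "x \<inter> {..t} = y \<inter> {..t}" using x(1) by metis
      then have "L t x = L t y" using tri(1) triangular_cong by blast
      then show False using False insert.prems(2) \<open>\<not> w \<le> t\<close> by simp
    qed
    then have "flip t x \<inter> {..<w} = y \<inter> {..<w}" using x(1) by (simp add: flip_Int_lessThan)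
    moreover have "L i (flip t x) = L i x" if "i \<in> u" for i
      using that insert.hyps(2) tri(2) triangular_flip_greater[of i "L i" t] by simp
    moreover have "L t (flip t x) = s t" using False triangular_flip_self[OF tri(1)] by simp
    ultimately show ?thesis using x(2) by auto
  qed
qed

lemma triangular_solvable:
  assumes "finite u" "\<forall>i\<in>u. triangular i (L i)"
  obtains x where "\<forall>i\<in>u. L i x = s i"
  using triangular_solve[OF assms, of 0] by auto

section \<open>Monomials in triangular coordinates\<close>

lemma mono_fun_empty [simp]: "mono_fun L {} = (\<lambda>x. True)"
  unfolding mono_fun_def by simp

lemma mono_fun_Un: "mono_fun L (u \<union> v) x \<longleftrightarrow> mono_fun L u x \<and> mono_fun L v x"
  unfolding mono_fun_def by blast

lemma mono_fun_subset: "v \<subseteq> u \<Longrightarrow> mono_fun L u x \<Longrightarrow> mono_fun L v x"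
  unfolding mono_fun_def by blast

lemma mono_fun_cong: "(\<And>i. i \<in> u \<Longrightarrow> L i = L' i) \<Longrightarrow> mono_fun L u = mono_fun L' u"
  unfolding mono_fun_def by (simp add: fun_eq_iff)

lemma mono_fun_satisfiable:
  assumes "finite u" "\<forall>i\<in>u. triangular i (L i)"
  obtains x where "mono_fun L u x"
  using triangular_solvable[OF assms, of "\<lambda>_. True"] unfolding mono_fun_def by auto

lemma mono_fun_not_factorE:
  assumes "finite u" "a \<notin> u" "\<forall>i\<in>insert a u. triangular i (L i)"
  obtains x where "mono_fun L u x" "\<not> L a x"
proof -
  obtain x where "\<forall>i\<in>insert a u. L i x = (i \<noteq> a)"
    using triangular_solvable[of "insert a u" L "\<lambda>i. i \<noteq> a"] assms by blast
  then show ?thesis using that assms(2) unfolding mono_fun_def by auto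
qed

lemma mono_fun_flip_greater:
  "\<forall>i\<in>u. triangular i (L i) \<and> i < s \<Longrightarrow> mono_fun L u (flip s x) = mono_fun L u x"
  unfolding mono_fun_def using triangular_flip_greater by blast

lemma bool_deriv_mono_fun:
  assumes "\<forall>i\<in>u. triangular i (L i) \<and> i \<le> t"
  shows "bool_deriv t (mono_fun L u) x \<longleftrightarrow> t \<in> u \<and> mono_fun L (u - {t}) x"
proof -
  have rest: "mono_fun L (u - {t}) (flip t x) = mono_fun L (u - {t}) x"
    using assms by (intro mono_fun_flip_greater) (auto simp: le_less)
  show ?thesis
  proof (cases "t \<in> u")
    case True
    then have split: "mono_fun L u y \<longleftrightarrow> L t y \<and> mono_fun L (u - {t}) y" for y
      unfolding mono_fun_def by blast
    have "L t (flip t x) = (\<not> L t x)"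
      using assms True by (intro triangular_flip_self) auto
    then show ?thesis
      using rest True split[of x] split[of "flip t x"] unfolding bool_deriv_def by auto
  next
    case False
    then show ?thesis using rest unfolding bool_deriv_def by simp
  qed
qed

lemma bool_deriv_mono_fun_top:
  assumes "\<forall>i\<in>u. triangular i (L i) \<and> i \<le> t" "t \<in> u"
  shows "bool_deriv t (mono_fun L u) = mono_fun L (u - {t})"
  using bool_deriv_mono_fun[OF assms(1)] assms(2) by (simp add: fun_eq_iff)

lemma top_var_mono_fun:
  assumes "finite u" "u \<noteq> {}" "\<forall>i\<in>u. triangular i (L i)"
  shows "top_var (mono_fun L u) (Max u)"
proof -
  have le: "\<forall>i\<in>u. triangular i (L i) \<and> i \<le> s" if "s \<ge> Max u" for s
    using assms(1,3) that by (auto dest: Max_ge[OF assms(1)])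
  obtain x where "mono_fun L (u - {Max u}) x"
    using mono_fun_satisfiable[of "u - {Max u}" L] assms by auto
  then have "bool_deriv (Max u) (mono_fun L u) x"
    using bool_deriv_mono_fun[OF le] Max_in[OF assms(1,2)] by simp
  moreover have "\<not> bool_deriv s (mono_fun L u) y" if "s > Max u" for s y
    using bool_deriv_mono_fun[OF le, of s] that Max_ge[OF assms(1)] by fastforce
  ultimately show ?thesis unfolding top_var_def by blast
qed

lemma top_var_mono_fun_iff:
  assumes "finite u" "\<forall>i\<in>u. triangular i (L i)"
  shows "top_var (mono_fun L u) t \<longleftrightarrow> u \<noteq> {} \<and> t = Max u"
proof
  assume top: "top_var (mono_fun L u) t"
  have "u \<noteq> {}"
  proof
    assume "u = {}"
    then show False using top top_var_const[of True] by simp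
  qed
  then show "u \<noteq> {} \<and> t = Max u"
    using top_var_unique[OF top top_var_mono_fun[OF assms(1) _ assms(2)]] by simp
qed (use top_var_mono_fun assms in blast)

lemma mono_fun_inj:
  assumes "finite u" "finite v" "\<forall>i\<in>u. triangular i (L i)" "\<forall>i\<in>v. triangular i (L' i)"
    and "mono_fun L u = mono_fun L' v"
  shows "u = v"
  using assms
proof (induction u arbitrary: v rule: finite_linorder_max_induct)
  case empty
  then show ?case using top_var_mono_fun_iff[of v L'] top_var_const[of True] by auto
next
  case (insert t u)
  have "Max (insert t u) = t" using insert.hyps by (intro Max_eqI) auto
  then have "top_var (mono_fun L' v) t"
    using insert.hyps(1) insert.prems top_var_mono_fun[of "insert t u" L] by simp
  then have "t \<in> v" "\<forall>i\<in>v. triangular i (L' i) \<and> i \<le> t"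
    using top_var_mono_fun_iff[OF insert.prems(1,3)] insert.prems(1,3) by auto
  moreover have "\<forall>i\<in>insert t u. triangular i (L i) \<and> i \<le> t"
    using insert.hyps(2) insert.prems(2) by auto
  ultimately have "mono_fun L u x = mono_fun L' (v - {t}) x" for x
    using bool_deriv_mono_fun[of "insert t u" L t x] bool_deriv_mono_fun[of v L' t x]
      insert.hyps(2) insert.prems(4) by auto
  then have "u = v - {t}"
    using insert.IH[of "v - {t}"] insert.prems by auto
  then show ?case using \<open>t \<in> v\<close> by blast
qed

text \<open>Both \<open>L\<^sub>i\<close> and \<open>L'\<^sub>i\<close> depend only on the coordinates up to \<open>i\<close>, and these can be kept
  while making every factor of \<open>L\<^sup>U = L'\<^sup>U\<close> true.\<close>

lemma mono_fun_agree_below: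
  assumes "finite U" "\<forall>i\<in>U. triangular i (L i)" "\<forall>i\<in>U. triangular i (L' i)"
    and "mono_fun L U = mono_fun L' U" "i \<in> U" "\<forall>j\<in>U. j < i \<longrightarrow> L j x"
  shows "L i x = L' i x"
proof -
  obtain y where y: "y \<inter> {..<i} = x \<inter> {..<i}" "\<forall>j\<in>U. L j y = True"
    using triangular_solve[OF assms(1,2), of i x "\<lambda>_. True"] assms(6) by auto
  then have "L' i y" using assms(4,5) unfolding mono_fun_def by metis
  moreover have "L i y" using y(2) assms(5) by simp
  moreover obtain \<phi> where "\<And>z. L i z = ((i \<in> z) \<noteq> \<phi> (z \<inter> {..<i}))"
    using assms(2,5) unfolding triangular_def by blast
  moreover obtain \<phi>' where "\<And>z. L' i z = ((i \<in> z) \<noteq> \<phi>' (z \<inter> {..<i}))"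
    using assms(3,5) unfolding triangular_def by blast
  ultimately show ?thesis using y(1) by metis
qed

lemma dropped_index_not_less:
  assumes "finite U" "finite g" "a \<in> U" "a \<notin> g" "U - {a} \<subseteq> g" "a' \<in> U" "U - {a'} \<subseteq> g'"
    and "\<forall>i\<in>U \<union> g. triangular i (L i)" "\<forall>i\<in>U. triangular i (L' i)"
    and "mono_fun L U = mono_fun L' U"
    and "\<forall>x. \<not> mono_fun L U x \<longrightarrow> mono_fun L g x = mono_fun L' g' x"
  shows "\<not> a' < a"
proof
  assume "a' < a"
  obtain x where x: "mono_fun L g x" "\<not> L a x"
    using mono_fun_not_factorE[of g a L] assms(2,4,8) \<open>a \<in> U\<close> by auto
  have "\<not> mono_fun L U x" using x(2) assms(3) unfolding mono_fun_def by blast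
  then have "mono_fun L' g' x" "\<not> mono_fun L' U x" using x(1) assms(10,11) by auto
  then have "\<not> L' a' x" using assms(7) unfolding mono_fun_def by blast
  moreover have "L a' x"
    using x(1) assms(5,6) \<open>a' < a\<close> unfolding mono_fun_def by blast
  moreover have "\<forall>j\<in>U. j < a' \<longrightarrow> L j x"
    using x(1) assms(5) \<open>a' < a\<close> unfolding mono_fun_def by fastforce
  then have "L a' x = L' a' x"
    using mono_fun_agree_below[OF assms(1) _ assms(9,10,6)] assms(8) by blast
  ultimately show False by simp
qed

lemma subset_if_same_dropped_index:
  assumes "finite g" "a \<in> U" "a \<notin> g" "a \<notin> g'"
    and "\<forall>i\<in>insert a g. triangular i (L i)" "\<forall>i\<in>g'. triangular i (L' i)"
    and "\<forall>x. \<not> mono_fun L U x \<longrightarrow> mono_fun L g x = mono_fun L' g' x"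
  shows "g' \<subseteq> g"
proof
  fix w assume "w \<in> g'"
  show "w \<in> g"
  proof (rule ccontr)
    assume "w \<notin> g"
    define K where "K = L(w := L' w)"
    have "\<forall>i\<in>insert a (insert w g). triangular i (K i)"
      using assms(5,6) \<open>w \<in> g'\<close> unfolding K_def by auto
    then obtain x where x: "\<forall>i\<in>insert a (insert w g). K i x = (i \<noteq> a \<and> i \<noteq> w)"
      using triangular_solvable[of "insert a (insert w g)" K "\<lambda>i. i \<noteq> a \<and> i \<noteq> w"] assms(1)
      by blast
    have "w \<noteq> a" using \<open>w \<in> g'\<close> assms(4) by blast
    then have "mono_fun L g x" "\<not> L a x" "\<not> L' w x"
      using x \<open>w \<notin> g\<close> assms(3) unfolding K_def mono_fun_def by (auto split: if_splits)
    then have "\<not> mono_fun L' g' x"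
      using \<open>w \<in> g'\<close> unfolding mono_fun_def by blast
    moreover have "\<not> mono_fun L U x" using \<open>\<not> L a x\<close> assms(2) unfolding mono_fun_def by blast
    ultimately show False using \<open>mono_fun L g x\<close> assms(7) by blast
  qed
qed

lemma eq_of_mono_fun_agree_on_zeros:
  assumes "finite U" "finite g" "finite g'"
    and "a \<in> U" "a \<notin> g" "U - {a} \<subseteq> g" "a' \<in> U" "a' \<notin> g'" "U - {a'} \<subseteq> g'"
    and "\<forall>i\<in>U \<union> g. triangular i (L i)" "\<forall>i\<in>U \<union> g'. triangular i (L' i)"
    and "mono_fun L U = mono_fun L' U"
    and "\<forall>x. \<not> mono_fun L U x \<longrightarrow> mono_fun L g x = mono_fun L' g' x"
  shows "g = g'"
proof -
  have zeros': "\<forall>x. \<not> mono_fun L' U x \<longrightarrow> mono_fun L' g' x = mono_fun L g x"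
    using assms(12,13) by simp
  have tri: "\<forall>i\<in>U \<union> g. triangular i (L i)" "\<forall>i\<in>U. triangular i (L i)"
    "\<forall>i\<in>U \<union> g'. triangular i (L' i)" "\<forall>i\<in>U. triangular i (L' i)"
    "\<forall>i\<in>insert a g. triangular i (L i)" "\<forall>i\<in>insert a' g'. triangular i (L' i)"
    "\<forall>i\<in>g. triangular i (L i)" "\<forall>i\<in>g'. triangular i (L' i)"
    using assms(4,7,10,11) by auto
  have "\<not> a' < a"
    by (rule dropped_index_not_less[OF assms(1,2,4-7,9) tri(1,4) assms(12,13)])
  moreover have "\<not> a < a'"
    by (rule dropped_index_not_less[OF assms(1,3,7-9,4,6) tri(3,2) assms(12)[symmetric] zeros'])
  ultimately have "a = a'" by simp
  then have "g' \<subseteq> g" "g \<subseteq> g'"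
    using subset_if_same_dropped_index[OF assms(2,4,5) _ tri(5,8) assms(13)]
      subset_if_same_dropped_index[OF assms(3,7,8) _ tri(6,7) zeros'] assms(5,8) by simp_all
  then show ?thesis by blast
qed

section \<open>Binomials in triangular coordinates\<close>

definition binom_fun :: "(nat \<Rightarrow> nat set \<Rightarrow> bool) \<Rightarrow> nat set \<Rightarrow> nat set \<Rightarrow> nat set \<Rightarrow> bool" where
  "binom_fun L f g x \<longleftrightarrow> mono_fun L f x \<noteq> mono_fun L g x"

lemma binom_fun_commute: "binom_fun L f g = binom_fun L g f"
  unfolding binom_fun_def by auto

lemma bool_deriv_binom_fun:
  assumes "\<forall>i\<in>f \<union> g. triangular i (L i) \<and> i \<le> t"
  shows "bool_deriv t (binom_fun L f g) x \<longleftrightarrow>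
    (t \<in> f \<and> mono_fun L (f - {t}) x) \<noteq> (t \<in> g \<and> mono_fun L (g - {t}) x)"
  using bool_deriv_mono_fun[of f L t x] bool_deriv_mono_fun[of g L t x] assms
  unfolding bool_deriv_def binom_fun_def by auto

lemma bool_deriv_binom_fun_common:
  assumes "\<forall>i\<in>f \<union> g. triangular i (L i) \<and> i \<le> t" "t \<in> f \<inter> g"
  shows "bool_deriv t (binom_fun L f g) = binom_fun L (f - {t}) (g - {t})"
  using bool_deriv_binom_fun[OF assms(1)] assms(2) unfolding binom_fun_def fun_eq_iff by simp

lemma bool_deriv_binom_fun_first:
  assumes "\<forall>i\<in>f \<union> g. triangular i (L i) \<and> i \<le> t" "t \<in> f - g"
  shows "bool_deriv t (binom_fun L f g) = mono_fun L (f - {t})"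
  using bool_deriv_binom_fun[OF assms(1)] assms(2) unfolding fun_eq_iff by simp

lemma top_var_binom_fun:
  assumes "finite f" "finite g" "f \<noteq> g" "\<forall>i\<in>f \<union> g. triangular i (L i)"
  shows "top_var (binom_fun L f g) (Max (f \<union> g))"
proof -
  define t where "t = Max (f \<union> g)"
  have fin: "finite (f \<union> g)" and ne: "f \<union> g \<noteq> {}" using assms(1-3) by auto
  have le: "\<forall>i\<in>f \<union> g. triangular i (L i) \<and> i \<le> s" if "s \<ge> t" for s
    using assms(4) Max_ge[OF fin] that unfolding t_def by fastforce
  have "\<exists>x. bool_deriv t (binom_fun L f g) x"
  proof (cases "t \<in> f \<inter> g")
    case True
    have "f - {t} \<noteq> g - {t}" using True assms(3) by blast
    then have "mono_fun L (f - {t}) \<noteq> mono_fun L (g - {t})"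
      using mono_fun_inj[of "f - {t}" "g - {t}" L L] assms(1,2,4) by auto
    then show ?thesis using bool_deriv_binom_fun[OF le] True by auto
  next
    case False
    have "t \<in> f \<union> g" using Max_in[OF fin ne] t_def by simp
    moreover obtain x where "mono_fun L ((f \<union> g) - {t}) x"
      using mono_fun_satisfiable[of "(f \<union> g) - {t}" L] assms(1,2,4) by auto
    ultimately have "bool_deriv t (binom_fun L f g) x"
      using bool_deriv_binom_fun[OF le] False unfolding mono_fun_def by auto
    then show ?thesis by blast
  qed
  moreover have "\<not> bool_deriv s (binom_fun L f g) x" if "s > t" for s x
  proof -
    have "s \<notin> f \<union> g" using le[OF order_refl] that by (meson leD)
    then show ?thesis using bool_deriv_binom_fun[OF le, of s x] that by simp
  qed
  ultimately show ?thesis unfolding top_var_def t_def by blast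
qed

lemma top_var_binom_fun_bounds:
  assumes "finite f" "finite g" "f \<noteq> g" "\<forall>i\<in>f \<union> g. triangular i (L i)"
    and "top_var (binom_fun L f g) t"
  shows "t \<in> f \<union> g" "\<forall>i\<in>f \<union> g. triangular i (L i) \<and> i \<le> t"
proof -
  have t: "t = Max (f \<union> g)" using top_var_unique[OF assms(5) top_var_binom_fun[OF assms(1-4)]] .
  have fin: "finite (f \<union> g)" and ne: "f \<union> g \<noteq> {}" using assms(1-3) by auto
  show "t \<in> f \<union> g" using Max_in[OF fin ne] t by simp
  show "\<forall>i\<in>f \<union> g. triangular i (L i) \<and> i \<le> t" using assms(4) Max_ge[OF fin] t by auto
qed

lemma card_Int_remove_less: "finite f \<Longrightarrow> t \<in> f \<inter> g \<Longrightarrow> card ((f - {t}) \<inter> (g - {t})) < card (f \<inter> g)"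
  by (intro psubset_card_mono) auto

lemma binom_fun_ne_mono_fun_top_in_first:
  assumes "finite g" "t \<in> f - g" "2 \<le> card (f - g)"
    and "\<forall>i\<in>f \<union> g. triangular i (L i) \<and> i \<le> t"
    and "t \<in> u" "\<forall>i\<in>u. triangular i (M i) \<and> i \<le> t"
  shows "binom_fun L f g \<noteq> mono_fun M u"
proof
  assume eq: "binom_fun L f g = mono_fun M u"
  have "\<not> f - g \<subseteq> {t}" using card_mono[of "{t}" "f - g"] assms(3) by auto
  then obtain a where a: "a \<in> f - g" "a \<noteq> t" by blast
  obtain x where x: "mono_fun L g x" "\<not> L a x"
    using mono_fun_not_factorE[of g a L] assms(1,4) a(1) by auto
  then have "binom_fun L f g x" using a(1) unfolding binom_fun_def mono_fun_def by auto
  then have "mono_fun M u x" using eq by simp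
  then have "mono_fun M (u - {t}) x" using mono_fun_subset by blast
  then have "mono_fun L (f - {t}) x"
    using bool_deriv_binom_fun_first[OF assms(4,2)] bool_deriv_mono_fun_top[OF assms(6,5)] eq
    by simp
  then show False using a x(2) unfolding mono_fun_def by blast
qed

lemma binom_fun_ne_mono_fun:
  assumes "finite f" "finite g" "2 \<le> card (f - g)" "2 \<le> card (g - f)"
    and "\<forall>i\<in>f \<union> g. triangular i (L i)" "finite u" "\<forall>i\<in>u. triangular i (M i)"
  shows "binom_fun L f g \<noteq> mono_fun M u"
  using assms
proof (induction "card (f \<inter> g)" arbitrary: f g u rule: less_induct)
  case less
  show ?case
  proof
    assume eq: "binom_fun L f g = mono_fun M u"
    have "f \<noteq> g" using less.prems(3) by auto
    obtain t where top: "top_var (mono_fun M u) t"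
      using top_var_binom_fun[OF less.prems(1,2) \<open>f \<noteq> g\<close> less.prems(5)] eq by auto
    have tfg: "t \<in> f \<union> g" "\<forall>i\<in>f \<union> g. triangular i (L i) \<and> i \<le> t"
      using top_var_binom_fun_bounds[OF less.prems(1,2) \<open>f \<noteq> g\<close> less.prems(5)] top eq by auto
    have tu: "t \<in> u" "\<forall>i\<in>u. triangular i (M i) \<and> i \<le> t"
      using top top_var_mono_fun_iff[OF less.prems(6,7)] less.prems(6,7) by auto
    consider "t \<in> f \<inter> g" | "t \<in> f - g" | "t \<in> g - f" using tfg(1) by blast
    then show False
    proof cases
      case 1
      have "binom_fun L (f - {t}) (g - {t}) = mono_fun M (u - {t})"
        using bool_deriv_binom_fun_common[OF tfg(2) 1] bool_deriv_mono_fun_top[OF tu(2,1)] eq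
        by simp
      moreover have "(f - {t}) - (g - {t}) = f - g" "(g - {t}) - (f - {t}) = g - f" using 1 by auto
      moreover have "\<forall>i\<in>(f - {t}) \<union> (g - {t}). triangular i (L i)" "\<forall>i\<in>u - {t}. triangular i (M i)"
        using less.prems(5,7) by auto
      ultimately show False
        using less.hyps[OF card_Int_remove_less[OF less.prems(1) 1]] less.prems(1-4,6)
        by (metis finite_Diff)
    next
      case 2
      then show False
        using binom_fun_ne_mono_fun_top_in_first[OF less.prems(2) 2 less.prems(3) tfg(2) tu] eq
        by simp
    next
      case 3
      have "\<forall>i\<in>g \<union> f. triangular i (L i) \<and> i \<le> t" using tfg(2) by auto
      then show False
        using binom_fun_ne_mono_fun_top_in_first[OF less.prems(1) 3 less.prems(4) _ tu] eq
        by (simp add: binom_fun_commute)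
    qed
  qed
qed

lemma binom_fun_eq_common_top:
  assumes "finite f" "finite g" "finite f'" "finite g'" "2 \<le> card (f - g)" "2 \<le> card (g - f)"
    and "t \<in> f \<inter> g" "t \<in> f' \<union> g'"
    and "\<forall>i\<in>f \<union> g. triangular i (L i) \<and> i \<le> t" "\<forall>i\<in>f' \<union> g'. triangular i (L' i) \<and> i \<le> t"
    and "binom_fun L f g = binom_fun L' f' g'"
  shows "t \<in> f' \<inter> g'"
proof (rule ccontr)
  assume "t \<notin> f' \<inter> g'"
  obtain F' G' where FG': "{F', G'} = {f', g'}" "t \<in> F' - G'"
    using \<open>t \<notin> f' \<inter> g'\<close> assms(8) by blast
  have "binom_fun L' f' g' = binom_fun L' F' G'"
    using FG'(1) by (metis binom_fun_commute doubleton_eq_iff)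
  moreover have "\<forall>i\<in>F' \<union> G'. triangular i (L' i) \<and> i \<le> t"
    using assms(10) FG'(1) by (auto simp: doubleton_eq_iff)
  ultimately have "binom_fun L (f - {t}) (g - {t}) = mono_fun L' (F' - {t})"
    using bool_deriv_binom_fun_common[OF assms(9,7)] bool_deriv_binom_fun_first[OF _ FG'(2)]
      assms(11) by metis
  moreover have "(f - {t}) - (g - {t}) = f - g" "(g - {t}) - (f - {t}) = g - f" using assms(7) by auto
  moreover have "\<forall>i\<in>(f - {t}) \<union> (g - {t}). triangular i (L i)" using assms(9) by auto
  moreover have "finite (F' - {t})" "\<forall>i\<in>F' - {t}. triangular i (L' i)"
    using assms(3,4,10) FG'(1) by (auto simp: doubleton_eq_iff)
  ultimately show False
    using binom_fun_ne_mono_fun[of "f - {t}" "g - {t}" L "F' - {t}" L'] assms(1,2,5,6) by auto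
qed

lemma card_2_memE:
  assumes "card A = 2" "t \<in> A"
  obtains a where "A = {a, t}" "a \<noteq> t"
  using assms by (auto simp: card_2_iff)

text \<open>The derivative in \<open>t\<close> is \<open>L\<^bsup>f-t\<^esup>\<close>, and on its zero set the binomial \<open>L\<^sup>f + L\<^sup>g\<close> reduces
  to \<open>L\<^sup>g\<close>.\<close>

lemma binom_fun_eq_top_in_first:
  assumes "finite f" "finite g" "finite f'" "finite g'"
    and "card (f - g) = 2" "card (f' - g') = 2" "t \<in> f - g" "t \<in> f' - g'"
    and "\<forall>i\<in>f \<union> g. triangular i (L i) \<and> i \<le> t" "\<forall>i\<in>f' \<union> g'. triangular i (L' i) \<and> i \<le> t"
    and "binom_fun L f g = binom_fun L' f' g'"
  shows "f = f' \<and> g = g'"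
proof -
  define U where "U = f - {t}"
  have "mono_fun L U = mono_fun L' (f' - {t})"
    using bool_deriv_binom_fun_first[OF assms(9,7)] bool_deriv_binom_fun_first[OF assms(10,8)]
      assms(11) unfolding U_def by simp
  moreover from this have U': "f' - {t} = U"
    using mono_fun_inj[of U "f' - {t}" L L'] assms(1,3,9,10) unfolding U_def by auto
  ultimately have eqU: "mono_fun L U = mono_fun L' U" by simp
  obtain a where a: "f - g = {a, t}" "a \<noteq> t" using card_2_memE[OF assms(5,7)] .
  obtain a' where a': "f' - g' = {a', t}" "a' \<noteq> t" using card_2_memE[OF assms(6,8)] .
  have "finite U" using assms(1) unfolding U_def by simp
  moreover have "a \<in> U" "a \<notin> g" "U - {a} \<subseteq> g" using a unfolding U_def by auto
  moreover have "a' \<in> U" "a' \<notin> g'" "U - {a'} \<subseteq> g'" using a' U' by auto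
  moreover have "\<forall>x. \<not> mono_fun L U x \<longrightarrow> mono_fun L g x = mono_fun L' g' x"
  proof (intro allI impI)
    fix x assume "\<not> mono_fun L U x"
    moreover from this have "\<not> mono_fun L' U x" using eqU by simp
    moreover have "U \<subseteq> f" "U \<subseteq> f'" using U' unfolding U_def by auto
    ultimately have "\<not> mono_fun L f x" "\<not> mono_fun L' f' x" using mono_fun_subset by blast+
    then show "mono_fun L g x = mono_fun L' g' x"
      using assms(11) unfolding binom_fun_def by metis
  qed
  moreover have "\<forall>i\<in>U \<union> g. triangular i (L i)" "\<forall>i\<in>U \<union> g'. triangular i (L' i)"
    using assms(9,10) U' unfolding U_def by auto
  ultimately have "g = g'"
    using eq_of_mono_fun_agree_on_zeros[OF _ assms(2,4)] eqU by blast
  moreover have "f = f'" using U' assms(7,8) unfolding U_def by blast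
  ultimately show ?thesis by blast
qed

lemma binom_fun_eq_top_in_one:
  assumes "finite f" "finite g" "finite f'" "finite g'"
    and "card (f - g) = 2" "card (g - f) = 2" "card (f' - g') = 2" "card (g' - f') = 2"
    and "t \<in> f \<union> g" "t \<notin> f \<inter> g" "t \<in> f' \<union> g'" "t \<notin> f' \<inter> g'"
    and "\<forall>i\<in>f \<union> g. triangular i (L i) \<and> i \<le> t" "\<forall>i\<in>f' \<union> g'. triangular i (L' i) \<and> i \<le> t"
    and "binom_fun L f g = binom_fun L' f' g'"
  shows "{f, g} = {f', g'}"
proof -
  obtain F G where FG: "{F, G} = {f, g}" "t \<in> F - G" using assms(9,10) by blast
  obtain F' G' where FG': "{F', G'} = {f', g'}" "t \<in> F' - G'" using assms(11,12) by blast
  have "binom_fun L F G = binom_fun L' F' G'"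
    using FG(1) FG'(1) assms(15) by (metis binom_fun_commute doubleton_eq_iff)
  moreover have "finite F" "finite G" "finite F'" "finite G'" "card (F - G) = 2" "card (F' - G') = 2"
    "\<forall>i\<in>F \<union> G. triangular i (L i) \<and> i \<le> t" "\<forall>i\<in>F' \<union> G'. triangular i (L' i) \<and> i \<le> t"
    using FG(1) FG'(1) assms(1-8,13,14) by (auto simp: doubleton_eq_iff)
  ultimately have "F = F' \<and> G = G'"
    using binom_fun_eq_top_in_first FG(2) FG'(2) by blast
  then show ?thesis using FG(1) FG'(1) by simp
qed

lemma binom_fun_inj:
  assumes "finite f" "finite g" "finite f'" "finite g'"
    and "card (f - g) = 2" "card (g - f) = 2" "card (f' - g') = 2" "card (g' - f') = 2"
    and "\<forall>i\<in>f \<union> g. triangular i (L i)" "\<forall>i\<in>f' \<union> g'. triangular i (L' i)"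
    and "binom_fun L f g = binom_fun L' f' g'"
  shows "{f, g} = {f', g'}"
  using assms
proof (induction "card (f \<inter> g)" arbitrary: f g f' g' rule: less_induct)
  case less
  have "f \<noteq> g" "f' \<noteq> g'" using less.prems(5,7) by auto
  obtain t where top: "top_var (binom_fun L f g) t"
    using top_var_binom_fun[OF less.prems(1,2) \<open>f \<noteq> g\<close> less.prems(9)] by blast
  have tin: "t \<in> f \<union> g" "t \<in> f' \<union> g'"
    and tle: "\<forall>i\<in>f \<union> g. triangular i (L i) \<and> i \<le> t" "\<forall>i\<in>f' \<union> g'. triangular i (L' i) \<and> i \<le> t"
    using top_var_binom_fun_bounds[OF less.prems(1,2) \<open>f \<noteq> g\<close> less.prems(9) top]
      top_var_binom_fun_bounds[OF less.prems(3,4) \<open>f' \<noteq> g'\<close> less.prems(10)] top less.prems(11)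
    by auto
  have "t \<in> f' \<inter> g'" if "t \<in> f \<inter> g"
    using binom_fun_eq_common_top[OF less.prems(1-4) _ _ that tin(2) tle less.prems(11)]
      less.prems(5,6) by simp
  moreover have "t \<in> f \<inter> g" if "t \<in> f' \<inter> g'"
    using binom_fun_eq_common_top[OF less.prems(3,4,1,2) _ _ that tin(1) tle(2,1)
        less.prems(11)[symmetric]] less.prems(7,8) by simp
  ultimately have common: "t \<in> f \<inter> g \<longleftrightarrow> t \<in> f' \<inter> g'" by blast
  show ?case
  proof (cases "t \<in> f \<inter> g")
    case True
    with common have t: "t \<in> f \<inter> g" "t \<in> f' \<inter> g'" by simp_all
    have "binom_fun L (f - {t}) (g - {t}) = binom_fun L' (f' - {t}) (g' - {t})"
      using bool_deriv_binom_fun_common[OF tle(1) t(1)] bool_deriv_binom_fun_common[OF tle(2) t(2)]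
        less.prems(11) by simp
    moreover have "(f - {t}) - (g - {t}) = f - g" "(g - {t}) - (f - {t}) = g - f"
      "(f' - {t}) - (g' - {t}) = f' - g'" "(g' - {t}) - (f' - {t}) = g' - f'"
      using t by auto
    moreover have "\<forall>i\<in>(f - {t}) \<union> (g - {t}). triangular i (L i)"
      "\<forall>i\<in>(f' - {t}) \<union> (g' - {t}). triangular i (L' i)"
      using less.prems(9,10) by auto
    ultimately have "{f - {t}, g - {t}} = {f' - {t}, g' - {t}}"
      using less.hyps[OF card_Int_remove_less[OF less.prems(1) t(1)]] less.prems(1-8)
      by (metis finite_Diff)
    then have "insert t ` {f - {t}, g - {t}} = insert t ` {f' - {t}, g' - {t}}" by simp
    then show ?thesis using t by (simp add: insert_absorb)
  next
    case False
    then show ?thesis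
      using binom_fun_eq_top_in_one[OF less.prems(1-8) tin(1) _ tin(2) _ tle less.prems(11)] common
      by blast
  qed
qed

section \<open>Evaluation of polynomials\<close>

text \<open>The monomial \<open>a\<close> takes the value \<open>1\<close> at the point with support \<open>x\<close> iff \<open>a \<subseteq> x\<close>.\<close>

definition poly_eval :: "rpoly \<Rightarrow> nat set \<Rightarrow> bool" where
  "poly_eval p x \<longleftrightarrow> odd (card {a \<in> p. a \<subseteq> x})"

lemma poly_eval_empty [simp]: "\<not> poly_eval {} x"
  unfolding poly_eval_def by simp

lemma poly_eval_pone [simp]: "poly_eval pone x"
proof -
  have "{a \<in> pone. a \<subseteq> x} = {{}}" unfolding pone_def by auto
  then show ?thesis unfolding poly_eval_def by simp
qed

lemma poly_eval_pvar [simp]: "poly_eval (pvar i) x \<longleftrightarrow> i \<in> x"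
proof -
  have "{a \<in> pvar i. a \<subseteq> x} = (if i \<in> x then {{i}} else {})" unfolding pvar_def by auto
  then show ?thesis unfolding poly_eval_def by simp
qed

lemma finite_pone [simp]: "finite pone"
  unfolding pone_def by simp

lemma finite_pvar [simp]: "finite (pvar i)"
  unfolding pvar_def by simp

lemma finite_padd [simp]: "finite p \<Longrightarrow> finite q \<Longrightarrow> finite (padd p q)"
  unfolding padd_def by simp

lemma poly_eval_padd:
  assumes "finite p" "finite q"
  shows "poly_eval (padd p q) x \<longleftrightarrow> poly_eval p x \<noteq> poly_eval q x"
proof -
  define P where "P = {a \<in> p. a \<subseteq> x}"
  define Q where "Q = {a \<in> q. a \<subseteq> x}"
  have fin: "finite P" "finite Q" using assms unfolding P_def Q_def by simp_all
  have "{a \<in> padd p q. a \<subseteq> x} = (P - Q) \<union> (Q - P)"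
    unfolding padd_def P_def Q_def by auto
  then have "card {a \<in> padd p q. a \<subseteq> x} = card (P - Q) + card (Q - P)"
    using fin by (simp add: card_Un_disjoint Diff_Int_distrib2)
  moreover have "card P = card (P \<inter> Q) + card (P - Q)" "card Q = card (P \<inter> Q) + card (Q - P)"
    using fin card_Int_Diff[of P Q] card_Int_Diff[of Q P] by (simp_all add: Int_commute)
  ultimately have "card P + card Q = card {a \<in> padd p q. a \<subseteq> x} + 2 * card (P \<inter> Q)"
    by simp
  then have "odd (card {a \<in> padd p q. a \<subseteq> x}) \<longleftrightarrow> odd (card P + card Q)" by simp
  then show ?thesis unfolding poly_eval_def P_def[symmetric] Q_def[symmetric] by simp
qed

lemma pmul_memE:
  assumes "u \<in> pmul p q"
  obtains a b where "a \<in> p" "b \<in> q" "u = a \<union> b"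
proof -
  have "odd (card {(a, b). a \<in> p \<and> b \<in> q \<and> a \<union> b = u})" using assms unfolding pmul_def by simp
  then have "{(a, b). a \<in> p \<and> b \<in> q \<and> a \<union> b = u} \<noteq> {}" by (metis card.empty even_zero)
  then show ?thesis using that by blast
qed

lemma finite_pmul [simp]:
  assumes "finite p" "finite q"
  shows "finite (pmul p q)"
proof (rule finite_subset)
  show "pmul p q \<subseteq> (\<lambda>(a, b). a \<union> b) ` (p \<times> q)"
    by (auto elim!: pmul_memE)
qed (use assms in simp)

lemma poly_eval_pmul:
  assumes "finite p" "finite q"
  shows "poly_eval (pmul p q) x \<longleftrightarrow> poly_eval p x \<and> poly_eval q x"
proof -
  define S where "S = {a \<in> p. a \<subseteq> x} \<times> {b \<in> q. b \<subseteq> x}"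
  define join where "join s = fst s \<union> snd s" for s :: "nat set \<times> nat set"
  define N where "N u = card {(a, b). a \<in> p \<and> b \<in> q \<and> a \<union> b = u}" for u
  have fin: "finite S" "finite (join ` S)" using assms unfolding S_def by simp_all
  have fiber: "{s \<in> S. join s = u} = {(a, b). a \<in> p \<and> b \<in> q \<and> a \<union> b = u}"
    if "u \<in> join ` S" for u
  proof -
    have "u \<subseteq> x" using that unfolding S_def join_def by auto
    then show ?thesis unfolding S_def join_def by auto
  qed
  have "card S = (\<Sum>u\<in>join ` S. card {s \<in> S. join s = u})"
    using sum.group[OF fin subset_refl, of "\<lambda>_. 1 :: nat"] by simp
  also have "\<dots> = sum N (join ` S)" using fiber unfolding N_def by simp
  finally have card_S: "card S = sum N (join ` S)" .
  have "{u \<in> pmul p q. u \<subseteq> x} = {u \<in> join ` S. odd (N u)}"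
  proof (intro equalityI subsetI)
    fix u assume u: "u \<in> {u \<in> pmul p q. u \<subseteq> x}"
    then have "odd (N u)" unfolding pmul_def N_def by simp
    obtain a b where "a \<in> p" "b \<in> q" "u = a \<union> b" using u by (auto elim: pmul_memE)
    then have "u = join (a, b)" "(a, b) \<in> S" using u unfolding S_def join_def by auto
    then show "u \<in> {u \<in> join ` S. odd (N u)}" using \<open>odd (N u)\<close> by blast
  next
    fix u assume "u \<in> {u \<in> join ` S. odd (N u)}"
    then show "u \<in> {u \<in> pmul p q. u \<subseteq> x}" unfolding pmul_def N_def S_def join_def by auto
  qed
  then have "poly_eval (pmul p q) x \<longleftrightarrow> odd (card S)"
    unfolding poly_eval_def card_S using even_sum_iff[OF fin(2), of N] by simp
  then show ?thesis unfolding poly_eval_def S_def by (simp add: card_cartesian_product)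
qed


lemma finite_foldr_padd: "\<forall>p\<in>set ps. finite p \<Longrightarrow> finite (foldr padd ps {})"
  by (induction ps) simp_all

lemma poly_eval_foldr_padd:
  "\<forall>p\<in>set ps. finite p \<Longrightarrow>
    poly_eval (foldr padd ps {}) x \<longleftrightarrow> odd (length (filter (\<lambda>p. poly_eval p x) ps))"
  by (induction ps) (simp_all add: poly_eval_padd finite_foldr_padd)

lemma finite_foldr_pmul: "\<forall>p\<in>set ps. finite p \<Longrightarrow> finite (foldr pmul ps pone)"
  by (induction ps) simp_all

lemma poly_eval_foldr_pmul:
  "\<forall>p\<in>set ps. finite p \<Longrightarrow> poly_eval (foldr pmul ps pone) x \<longleftrightarrow> (\<forall>p\<in>set ps. poly_eval p x)"
  by (induction ps) (simp_all add: poly_eval_pmul finite_foldr_pmul)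

lemma finite_lin_img: "finite (lin_img B e i)"
  unfolding lin_img_def by (simp add: finite_foldr_padd)

lemma triangular_lin_img: "triangular i (poly_eval (lin_img B e i))"
proof -
  define js where "js = filter (B i) [0..<i]"
  define \<phi> where "\<phi> y \<longleftrightarrow> odd (length (filter (\<lambda>j. j \<in> y) js)) \<noteq> e i" for y
  have "poly_eval (lin_img B e i) x \<longleftrightarrow> (i \<in> x) \<noteq> \<phi> x" for x
    unfolding lin_img_def \<phi>_def js_def
    by (simp add: poly_eval_padd poly_eval_foldr_padd finite_foldr_padd filter_map comp_def)
  moreover have "\<phi> x = \<phi> (x \<inter> {..<i})" for x
  proof -
    have "\<forall>j\<in>set js. j < i" unfolding js_def by simp
    then have "filter (\<lambda>j. j \<in> x) js = filter (\<lambda>j. j \<in> x \<inter> {..<i}) js" by (intro filter_cong) auto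
    then show ?thesis unfolding \<phi>_def by simp
  qed
  ultimately show ?thesis unfolding triangular_def by metis
qed

lemma finite_act: "finite u \<Longrightarrow> finite (act Be u)"
  unfolding act_def by (simp add: finite_foldr_pmul finite_lin_img)

lemma poly_eval_act:
  "finite u \<Longrightarrow> poly_eval (act Be u) = mono_fun (\<lambda>i. poly_eval (lin_img (fst Be) (snd Be) i)) u"
  unfolding act_def mono_fun_def by (simp add: poly_eval_foldr_pmul finite_lin_img fun_eq_iff)

lemma poly_eval_pair_setE:
  assumes "finite f" "finite g" "P \<in> pair_set m f g"
  obtains L where "\<forall>i. triangular i (L i)" "poly_eval P = binom_fun L f g"
proof -
  define h where "h = f \<inter> g"
  obtain Be1 Be2 Be3 where P: "P = pmul (act Be1 h) (padd (act Be2 (f - h)) (act Be3 (g - h)))"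
    using assms(3) unfolding pair_set_def Let_def set_mul_def set_add_def orbit_def h_def by blast
  define lin where "lin Be i = poly_eval (lin_img (fst Be) (snd Be) i)" for Be i
  define L where "L i = lin (if i \<in> h then Be1 else if i \<in> f then Be2 else Be3) i" for i
  have "triangular i (L i)" for i unfolding L_def lin_def by (rule triangular_lin_img)
  moreover have fin: "finite h" "finite (f - h)" "finite (g - h)" using assms(1,2) unfolding h_def by auto
  have "mono_fun (lin Be1) h = mono_fun L h" "mono_fun (lin Be2) (f - h) = mono_fun L (f - h)"
    "mono_fun (lin Be3) (g - h) = mono_fun L (g - h)"
    by (rule mono_fun_cong, auto simp: L_def h_def)+
  then have "poly_eval (act Be1 h) = mono_fun L h" "poly_eval (act Be2 (f - h)) = mono_fun L (f - h)"
    "poly_eval (act Be3 (g - h)) = mono_fun L (g - h)"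
    using fin by (simp_all add: poly_eval_act lin_def[abs_def])
  then have "poly_eval P x \<longleftrightarrow> mono_fun L h x \<and> (mono_fun L (f - h) x \<noteq> mono_fun L (g - h) x)" for x
    unfolding P using fin by (simp add: poly_eval_pmul poly_eval_padd finite_act)
  moreover have "f = h \<union> (f - h)" "g = h \<union> (g - h)" unfolding h_def by auto
  ultimately show ?thesis using that unfolding binom_fun_def by (metis mono_fun_Un)
qed

section \<open>Layers of a decreasing monomial set\<close>

lemma layer_memD:
  assumes "decreasing m I" "f \<in> layer I r"
  shows "finite f" "card f = r"
proof -
  have "f \<subseteq> {..<m}" using assms unfolding decreasing_def monomials_def layer_def by blast
  then show "finite f" by (rule finite_subset) simp
  show "card f = r" using assms(2) unfolding layer_def by simp
qed

lemma card_Diff_eq_2: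
  assumes "finite f" "finite g" "card f = r" "card g = r" "int (card (f \<inter> g)) = int r - 2"
  shows "card (f - g) = 2"
  using card_Diff_subset_Int[of f g] assms by simp

theorem proposition2:
  fixes m r :: nat and I :: "nat set set" and f g f' g' :: "nat set"
  assumes "m \<ge> 1"
    and "decreasing m I"
    and "I \<noteq> {}"
    and "r = Max (card ` I)"
    and "f \<in> layer I r" and "g \<in> layer I r"
    and "f' \<in> layer I r" and "g' \<in> layer I r"
    and "{f, g} \<noteq> {f', g'}"
    and "int (card (f \<inter> g)) = int r - 2"
    and "int (card (f' \<inter> g')) = int r - 2"
  shows "pair_set m f g \<inter> pair_set m f' g' = {}"
proof (rule equals0I)
  fix P assume P: "P \<in> pair_set m f g \<inter> pair_set m f' g'"
  have fin: "finite f" "finite g" "finite f'" "finite g'"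
    and card: "card f = r" "card g = r" "card f' = r" "card g' = r"
    using layer_memD[OF assms(2)] assms(5-8) by blast+
  have "int (card (g \<inter> f)) = int r - 2" "int (card (g' \<inter> f')) = int r - 2"
    using assms(10,11) by (simp_all add: Int_commute)
  then have two: "card (f - g) = 2" "card (g - f) = 2" "card (f' - g') = 2" "card (g' - f') = 2"
    using card_Diff_eq_2[OF fin(1,2) card(1,2) assms(10)] card_Diff_eq_2[OF fin(2,1) card(2,1)]
      card_Diff_eq_2[OF fin(3,4) card(3,4) assms(11)] card_Diff_eq_2[OF fin(4,3) card(4,3)]
    by simp_all
  obtain L where L: "\<forall>i. triangular i (L i)" "poly_eval P = binom_fun L f g"
    using poly_eval_pair_setE[OF fin(1,2)] P by blast
  obtain L' where L': "\<forall>i. triangular i (L' i)" "poly_eval P = binom_fun L' f' g'"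
    using poly_eval_pair_setE[OF fin(3,4)] P by blast
  have "binom_fun L f g = binom_fun L' f' g'" using L(2) L'(2) by simp
  then have "{f, g} = {f', g'}" using binom_fun_inj[OF fin two] L(1) L'(1) by blast
  then show False using assms(9) by contradiction
qed

end
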